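(* Consider a branching random walk as below and let $R$ be the supremum of the positions of all individuals of all generations (including the initial individual at $0$). Suppose either that the underlying Galton–Watson process becomes extinct a.s., or that it is supercritical with $\gamma<0$. Then $0\le R<\infty$ a.s. and the law of $R$ solves the recursive distributional equation $$R\stackrel d=\max\Big(0,\max_{i\le^* N}(R_i+\xi_i)\Big),\qquad 0\le R<\infty,$$ where $R_1,R_2,\dots$ are i.i.d. copies of $R$ independent of $(N;\xi_i)$ and the inner max over an empty set is omitted. If extinction is certain, the law of $R$ is the unique solution of this equation and the associated invariant RTP is endogenous. In the supercritical case, the law of $R$ is the weak limit of $T^n(\delta_0)$ (with $T$ the map induced by the equation), it is stochastically smaller than every solution, and the associated invariant RTP is endogenous.
   Context: Branching random walk (BRW) on $\mathbb R$: generation $0$ consists of one individual at position $0$. Each individual at position $x$ has a random number $N\in\{0,1,2,\dots,\infty\}$ of children, at positions $x+\xi_i$, $i\le^*N$, where $\infty>\xi_1\ge\xi_2\ge\cdots$; the families $(N;\xi_i)$ are i.i.d. over individuals with an arbitrary joint law satisfying the moment condition: there is $\theta>0$ with $m(\theta):=\mathbb E[\sum_i e^{\theta\xi_i}]<\infty$. Here $i\le^*N$ means $i\le N$ if $N<\infty$ and $i<\infty$ if $N=\infty$. $R_n$ denotes the position of the rightmost individual in generation $n$ ($-\infty$ if none). It is known that if the BRW is supercritical ($\mathbb E N>1$) there is a constant $\gamma\in(-\infty,\infty)$ with $n^{-1}R_n\to\gamma$ a.s. on nonextinction. The map $T$ sends a law $\mu$ on $[0,\infty)$ to the law of $\max(0,\max_{i\le^*N}(X_i+\xi_i))$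 with $X_i$ i.i.d. $\mu$ independent of $(N;\xi_i)$. Invariant recursive tree process (RTP) with marginal $\mu$: indexing individuals of the family tree by finite words $\mathbf i$ of positive integers with i.i.d. data $(N_{\mathbf i};\xi_{\mathbf ij})$, a family $(X_{\mathbf i})$ with each $X_{\mathbf i}\sim\mu$, $X_{\mathbf i}=\max(0,\max_{j\le^*N_{\mathbf i}}(X_{\mathbf ij}+\xi_{\mathbf ij}))$ a.s., and the generation-$d$ variables i.i.d. and independent of the data at generations $<d$; it is endogenous if $X_\emptyset$ is measurable with respect to the $\sigma$-field of all data $(N_{\mathbf i};\xi_{\mathbf ij})$. *)

theory Defs
  imports "HOL-Probability.Probability"
begin

text \<open>A family (the offspring data of one individual) is a pair (N, xi):
  N :: enat is the number of children (possibly infinite), and xi :: nat => real gives the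
  displacements; child j (0-indexed) exists iff enat j < N, so the paper's xi_1, xi_2, ...
  are xi 0, xi 1, ...  Values xi j with enat j >= N are irrelevant.\<close>

type_synonym family = "enat \<times> (nat \<Rightarrow> real)"

definition family_space :: "family measure" where
  "family_space = count_space UNIV \<Otimes>\<^sub>M PiM UNIV (\<lambda>_. borel)"

definition brw_law :: "family measure \<Rightarrow> bool" where
  "brw_law F \<longleftrightarrow> prob_space F \<and> sets F = sets family_space
     \<and> (AE f in F. \<forall>i j. i \<le> j \<longrightarrow> enat j < fst f \<longrightarrow> snd f j \<le> snd f i)
     \<and> (\<exists>\<theta>>0. (\<integral>\<^sup>+ f. (\<Sum>i. if enat i < fst f then ennreal (exp (\<theta> * snd f i)) else 0) \<partial>F) < \<infinity>)"

text \<open>Individuals are finite words of naturals; [i1,...,ik] is child ik of [i1,...,i(k-1)].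
  A sample of the whole BRW is omega :: nat list => family, omega u being the data of u.\<close>

definition brw_space :: "family measure \<Rightarrow> (nat list \<Rightarrow> family) measure" where
  "brw_space F = PiM UNIV (\<lambda>_. F)"

fun alive :: "(nat list \<Rightarrow> family) \<Rightarrow> nat list \<Rightarrow> bool" where
  "alive \<omega> [] = True"
| "alive \<omega> (j # w) = (enat j < fst (\<omega> []) \<and> alive (\<lambda>v. \<omega> (j # v)) w)"

fun pos :: "(nat list \<Rightarrow> family) \<Rightarrow> nat list \<Rightarrow> real" where
  "pos \<omega> [] = 0"
| "pos \<omega> (j # w) = snd (\<omega> []) j + pos (\<lambda>v. \<omega> (j # v)) w"

text \<open>Rightmost position in generation n (-infinity if the generation is empty).\<close>
definition rightmost :: "(nat list \<Rightarrow> family) \<Rightarrow> nat \<Rightarrow> ereal" where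
  "rightmost \<omega> n = (SUP w\<in>{w. alive \<omega> w \<and> length w = n}. ereal (pos \<omega> w))"

definition nonextinct :: "(nat list \<Rightarrow> family) \<Rightarrow> bool" where
  "nonextinct \<omega> \<longleftrightarrow> (\<forall>n. \<exists>w. alive \<omega> w \<and> length w = n)"

definition allmax :: "(nat list \<Rightarrow> family) \<Rightarrow> ereal" where
  "allmax \<omega> = (SUP w\<in>{w. alive \<omega> w}. ereal (pos \<omega> w))"

definition lawR :: "family measure \<Rightarrow> ereal measure" where
  "lawR F = distr (brw_space F) borel allmax"

text \<open>The map T.  Laws are taken on ereal (the sup may a priori be infinite);
  the empty inner max is -infinity, hence omitted by the outer max with 0.\<close>
definition rde_map :: "family \<Rightarrow> (nat \<Rightarrow> ereal) \<Rightarrow> ereal" where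
  "rde_map f X = max 0 (SUP i\<in>{i. enat i < fst f}. X i + ereal (snd f i))"

definition T_op :: "family measure \<Rightarrow> ereal measure \<Rightarrow> ereal measure" where
  "T_op F \<mu> = distr (F \<Otimes>\<^sub>M PiM UNIV (\<lambda>_::nat. \<mu>)) borel (\<lambda>(f, X). rde_map f X)"

definition rde_solution :: "family measure \<Rightarrow> ereal measure \<Rightarrow> bool" where
  "rde_solution F \<mu> \<longleftrightarrow> prob_space \<mu> \<and> sets \<mu> = sets borel
     \<and> emeasure \<mu> {0..<\<infinity>} = 1 \<and> T_op F \<mu> = \<mu>"

definition stoch_le :: "ereal measure \<Rightarrow> ereal measure \<Rightarrow> bool" where
  "stoch_le \<mu> \<nu> \<longleftrightarrow> (\<forall>x. measure \<mu> {x<..} \<le> measure \<nu> {x<..})"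

definition inv_RTP :: "family measure \<Rightarrow> 'o measure \<Rightarrow> (nat list \<Rightarrow> 'o \<Rightarrow> family)
     \<Rightarrow> (nat list \<Rightarrow> 'o \<Rightarrow> ereal) \<Rightarrow> ereal measure \<Rightarrow> bool" where
  "inv_RTP F M data X \<mu> \<longleftrightarrow> prob_space M
     \<and> prob_space.indep_vars M (\<lambda>_. F) data UNIV
     \<and> (\<forall>w. distr M F (data w) = F)
     \<and> (\<forall>w. X w \<in> borel_measurable M \<and> distr M borel (X w) = \<mu>)
     \<and> (\<forall>w. AE \<omega> in M. X w \<omega> = rde_map (data w \<omega>) (\<lambda>j. X (w @ [j]) \<omega>))
     \<and> (\<forall>d::nat. prob_space.indep_vars M (\<lambda>_. borel) X {w. length w = d}
          \<and> prob_space.indep_set M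
              {(\<lambda>\<omega>. restrict (\<lambda>w. X w \<omega>) {w. length w = d}) -` A \<inter> space M
                 | A. A \<in> sets (PiM {w. length w = d} (\<lambda>_. borel))}
              {(\<lambda>\<omega>. restrict (\<lambda>v. data v \<omega>) {v. length v < d}) -` B \<inter> space M
                 | B. B \<in> sets (PiM {v. length v < d} (\<lambda>_. F))})"

definition endogenous :: "family measure \<Rightarrow> 'o measure \<Rightarrow> (nat list \<Rightarrow> 'o \<Rightarrow> family)
     \<Rightarrow> (nat list \<Rightarrow> 'o \<Rightarrow> ereal) \<Rightarrow> bool" where
  "endogenous F M data X \<longleftrightarrow>
     (\<exists>g \<in> measurable (PiM UNIV (\<lambda>_::nat list. F)) borel. AE \<omega> in M. X [] \<omega> = g (\<lambda>w. data w \<omega>))"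

end

theory Submission
  imports Defs
begin

text \<open>Splitting the family tree at its root shows that R = allmax satisfies
  R = max(0, max_i (R_i + xi_i)) with R_i the maxima of the i.i.d. subtrees, so law(R) is a fixed
  point of T. The same splitting identifies T^n(delta_0) with the law of the maximum R_n over the
  first n generations, which increases to R; and T^n(mu) with the law of the value obtained by
  attaching i.i.d. mu-distributed labels to generation n and applying the recursion n times.
  For a solution mu these labels are nonnegative, so that value dominates R_n (minimality of
  law(R)); under extinction it equals R as soon as generation n is empty (uniqueness). R is finite
  because, under either hypothesis, only finitely many generations reach (0, infinity), while the
  maximum of generation n is bounded by (1/theta) log of the sum of exp(theta pos) over the
  generation, whose mean m(theta)^n is finite. Endogeny: in an invariant RTP with marginal law(R),
  unfolding the recursion along the tree shows that R computed from the data is at most the root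
  value, and two variables with the same law, one dominating the other, agree almost surely.\<close>

lemma (in prob_space) distr_pair_snd:
  assumes "sigma_finite_measure N"
  shows "distr (M \<Otimes>\<^sub>M N) N snd = N"
proof (intro measure_eqI)
  interpret N: sigma_finite_measure N by fact
  interpret pair_sigma_finite M N by unfold_locales
  fix A assume A: "A \<in> sets (distr (M \<Otimes>\<^sub>M N) N snd)"
  then have "emeasure (distr (M \<Otimes>\<^sub>M N) N snd) A = emeasure (M \<Otimes>\<^sub>M N) (space M \<times> A)"
    by (auto simp: emeasure_distr space_pair_measure dest: sets.sets_into_space
             intro!: arg_cong2[where f=emeasure])
  with A show "emeasure (distr (M \<Otimes>\<^sub>M N) N snd) A = emeasure N A"
    by (simp add: N.emeasure_pair_measure_Times emeasure_space_1)
qed simp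

lemma distr_PiM_map:
  assumes M: "\<And>i. prob_space (M i)" and f: "\<And>i. f i \<in> measurable (M i) (N i)"
  shows "distr (PiM UNIV M) (PiM UNIV N) (\<lambda>\<omega> i. f i (\<omega> i))
       = PiM UNIV (\<lambda>i. distr (M i) (N i) (f i))"
proof (rule measure_eqI_PiM_infinite[symmetric])
  show "sets (PiM UNIV (\<lambda>i. distr (M i) (N i) (f i))) = sets (PiM UNIV N)"
    by (intro sets_PiM_cong) auto
  show "finite_measure (PiM UNIV (\<lambda>i. distr (M i) (N i) (f i)))"
  proof -
    interpret prob_space "PiM UNIV (\<lambda>i. distr (M i) (N i) (f i))"
      using M f by (intro prob_space_PiM prob_space.prob_space_distr) auto
    show ?thesis by unfold_locales
  qed
  have mf: "(\<lambda>\<omega> i. f i (\<omega> i)) \<in> measurable (PiM UNIV M) (PiM UNIV N)"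
    by (rule measurable_PiM_single')
       (auto simp: space_PiM PiE_iff intro!: measurable_space[OF f] measurable_compose[OF _ f])
  fix A J assume J: "finite J" and A: "\<And>i. i \<in> J \<Longrightarrow> A i \<in> sets (N i)"
  have "emeasure (PiM UNIV (\<lambda>i. distr (M i) (N i) (f i))) (prod_emb UNIV N J (Pi\<^sub>E J A))
      = emeasure (PiM UNIV (\<lambda>i. distr (M i) (N i) (f i)))
          (prod_emb UNIV (\<lambda>i. distr (M i) (N i) (f i)) J (Pi\<^sub>E J A))"
    by (simp add: prod_emb_def)
  also have "\<dots> = (\<Prod>i\<in>J. emeasure (distr (M i) (N i) (f i)) (A i))"
    using J A M f by (intro emeasure_PiM_emb prob_space.prob_space_distr) auto
  also have "\<dots> = (\<Prod>i\<in>J. emeasure (M i) (f i -` A i \<inter> space (M i)))"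
    using A f by (intro prod.cong refl emeasure_distr) auto
  also have "\<dots> = emeasure (PiM UNIV M) (prod_emb UNIV M J (Pi\<^sub>E J (\<lambda>i. f i -` A i \<inter> space (M i))))"
    using J A M f by (intro emeasure_PiM_emb[symmetric]) (auto intro!: measurable_sets)
  also have "prod_emb UNIV M J (Pi\<^sub>E J (\<lambda>i. f i -` A i \<inter> space (M i)))
      = (\<lambda>\<omega> i. f i (\<omega> i)) -` prod_emb UNIV N J (Pi\<^sub>E J A) \<inter> space (PiM UNIV M)"
    using measurable_space[OF f] by (auto simp: prod_emb_def space_PiM PiE_iff)
  also have "emeasure (PiM UNIV M) \<dots>
      = emeasure (distr (PiM UNIV M) (PiM UNIV N) (\<lambda>\<omega> i. f i (\<omega> i))) (prod_emb UNIV N J (Pi\<^sub>E J A))"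
    using J A mf by (intro emeasure_distr[symmetric]) (auto intro!: sets_PiM_I)
  finally show "emeasure (PiM UNIV (\<lambda>i. distr (M i) (N i) (f i))) (prod_emb UNIV N J (Pi\<^sub>E J A))
      = emeasure (distr (PiM UNIV M) (PiM UNIV N) (\<lambda>\<omega> i. f i (\<omega> i))) (prod_emb UNIV N J (Pi\<^sub>E J A))" .
qed simp

lemma (in prob_space) distr_iid_eq_PiM:
  assumes indep: "indep_vars (\<lambda>_. P) X UNIV" and law: "\<And>i. distr M P (X i) = P"
  shows "distr M (PiM UNIV (\<lambda>_. P)) (\<lambda>x i. X i x) = PiM UNIV (\<lambda>_. P)"
proof -
  have rv: "\<And>i. random_variable P (X i)"
    using indep unfolding indep_vars_def by blast
  show ?thesis
    using indep_vars_iff_distr_eq_PiM[where I=UNIV and M'="\<lambda>_. P" and X=X, OF _ rv] indep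
    by (simp add: law restrict_UNIV)
qed

lemma nn_integral_PiM_component:
  assumes "prob_space M" "i \<in> I" "h \<in> borel_measurable M"
  shows "(\<integral>\<^sup>+ x. h (x i) \<partial>PiM I (\<lambda>_. M)) = (\<integral>\<^sup>+ y. h y \<partial>M)"
proof -
  have "(\<integral>\<^sup>+ x. h (x i) \<partial>PiM I (\<lambda>_. M)) = (\<integral>\<^sup>+ y. h y \<partial>distr (PiM I (\<lambda>_. M)) M (\<lambda>x. x i))"
    using assms by (intro nn_integral_distr[symmetric]) simp_all
  also have "distr (PiM I (\<lambda>_. M)) M (\<lambda>x. x i) = M"
    using assms by (intro distr_PiM_component) simp_all
  finally show ?thesis .
qed

text \<open>For each rational q, the event Y \<le> q < X has probability P(Y \<le> q) - P(X \<le> q) = 0.\<close>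
lemma AE_eq_if_AE_le_and_distr_eq:
  fixes X Y :: "'a \<Rightarrow> ereal"
  assumes M: "prob_space M"
    and X: "X \<in> borel_measurable M" and Y: "Y \<in> borel_measurable M"
    and le: "AE \<omega> in M. Y \<omega> \<le> X \<omega>"
    and law: "distr M borel X = distr M borel Y"
  shows "AE \<omega> in M. X \<omega> = Y \<omega>"
proof -
  interpret prob_space M by fact
  have gap_null: "AE \<omega> in M. \<not> (Y \<omega> \<le> of_rat q \<and> of_rat q < X \<omega>)" for q :: rat
  proof -
    define A where "A = {\<omega> \<in> space M. Y \<omega> \<le> of_rat q}"
    define B where "B = {\<omega> \<in> space M. X \<omega> \<le> of_rat q}"
    have A: "A \<in> sets M" and B: "B \<in> sets M"
      unfolding A_def B_def using X Y by measurable
    have "measure M B = measure (distr M borel X) {..of_rat q}"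
      using X by (subst measure_distr) (auto simp: B_def vimage_def Int_def conj_commute)
    also have "\<dots> = measure M A"
      using Y by (subst law, subst measure_distr) (auto simp: A_def vimage_def Int_def conj_commute)
    finally have AB: "measure M B = measure M A" .
    have "AE x in M. (x \<in> A \<inter> B) = (x \<in> B)"
      using le by eventually_elim (auto simp: A_def B_def intro: order.trans)
    then have "measure M (A \<inter> B) = measure M B"
      using A B by (intro measure_eq_AE) auto
    then have "measure M (A - B) = 0"
      using A B AB by (simp add: finite_measure_Diff')
    then have "A - B \<in> null_sets M"
      using A B by (auto simp: emeasure_eq_measure null_sets_def)
    then have "AE \<omega> in M. \<omega> \<notin> A - B" by (rule AE_not_in)
    with AE_space show ?thesis by eventually_elim (auto simp: A_def B_def)
  qed
  have "AE \<omega> in M. \<forall>q::rat. \<not> (Y \<omega> \<le> of_rat q \<and> of_rat q < X \<omega>)"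
    using gap_null by (simp add: AE_all_countable)
  with le show ?thesis
  proof eventually_elim
    case (elim \<omega>)
    show "X \<omega> = Y \<omega>"
    proof (rule ccontr)
      assume "X \<omega> \<noteq> Y \<omega>"
      with elim have "Y \<omega> < X \<omega>" by simp
      then obtain q :: rat where "Y \<omega> < of_rat q" "of_rat q < X \<omega>"
        using ereal_dense3 by blast
      with elim show False by (meson less_imp_le)
    qed
  qed
qed

lemma distr_eq_if_eq_outside_vanishing:
  assumes M: "prob_space M"
    and f: "\<And>n. f n \<in> measurable M N" and g: "g \<in> measurable M N"
    and E: "\<And>n. E n \<in> sets M" and E_vanish: "(\<lambda>n. measure M (E n)) \<longlonglongrightarrow> 0"
    and eq: "\<And>n x. x \<in> space M \<Longrightarrow> x \<notin> E n \<Longrightarrow> f n x = g x"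
    and law: "\<And>n. distr M N (f n) = \<nu>"
  shows "distr M N g = \<nu>"
proof (rule measure_eqI)
  interpret prob_space M by fact
  interpret \<nu>: prob_space \<nu> using law[of 0] f by (metis prob_space_distr)
  interpret G: prob_space "distr M N g" using g by (rule prob_space_distr)
  show "sets (distr M N g) = sets \<nu>" using law[of 0] by auto
  fix A assume "A \<in> sets (distr M N g)"
  then have A: "A \<in> sets N" by simp
  define S where "S = g -` A \<inter> space M"
  define S' where "S' n = f n -` A \<inter> space M" for n
  have S: "S \<in> sets M" and S': "S' n \<in> sets M" for n
    unfolding S_def S'_def using A f g by (auto intro: measurable_sets)
  have "\<bar>measure \<nu> A - measure (distr M N g) A\<bar> \<le> measure M (E n)" for n
  proof -
    have "measure \<nu> A = measure M (S' n)" "measure (distr M N g) A = measure M S"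
      unfolding S_def S'_def using A f g law[of n, symmetric] by (auto intro!: measure_distr)
    moreover have "measure M (S' n) \<le> measure M S + measure M (E n)"
    proof -
      have "S' n \<subseteq> S \<union> E n" using eq by (auto simp: S_def S'_def)
      then have "measure M (S' n) \<le> measure M (S \<union> E n)"
        using S E by (intro finite_measure_mono) auto
      also have "\<dots> \<le> measure M S + measure M (E n)" using S E by (rule measure_Un_le)
      finally show ?thesis .
    qed
    moreover have "measure M S \<le> measure M (S' n) + measure M (E n)"
    proof -
      have "S \<subseteq> S' n \<union> E n" using eq by (auto simp: S_def S'_def)
      then have "measure M S \<le> measure M (S' n \<union> E n)"
        using S' E by (intro finite_measure_mono) auto
      also have "\<dots> \<le> measure M (S' n) + measure M (E n)" using S' E by (rule measure_Un_le)
      finally show ?thesis .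
    qed
    ultimately show ?thesis by linarith
  qed
  then have "\<bar>measure \<nu> A - measure (distr M N g) A\<bar> \<le> 0"
    by (intro LIMSEQ_le_const[OF E_vanish]) auto
  then show "emeasure (distr M N g) A = emeasure \<nu> A"
    by (simp add: G.emeasure_eq_measure \<nu>.emeasure_eq_measure)
qed

lemma cdf_distr_real_of_ereal:
  fixes \<mu> :: "ereal measure"
  assumes \<mu>: "sets \<mu> = sets borel"
    and finite: "AE y in \<mu>. \<bar>y\<bar> \<noteq> \<infinity>"
  shows "cdf (distr \<mu> borel real_of_ereal) x = measure \<mu> {..ereal x}"
proof -
  have real_of_ereal: "real_of_ereal \<in> borel_measurable \<mu>"
    by (subst measurable_cong_sets[OF \<mu> refl]) simp
  have "cdf (distr \<mu> borel real_of_ereal) x = measure \<mu> (real_of_ereal -` {..x} \<inter> space \<mu>)"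
    unfolding cdf_def by (rule measure_distr[OF real_of_ereal]) simp
  also have "\<dots> = measure \<mu> {..ereal x}"
  proof (rule measure_eq_AE)
    show "AE y in \<mu>. (y \<in> real_of_ereal -` {..x} \<inter> space \<mu>) = (y \<in> {..ereal x})"
      using finite
    proof eventually_elim
      case (elim y)
      then show ?case by (cases y) (auto simp: sets_eq_imp_space_eq[OF \<mu>])
    qed
    show "real_of_ereal -` {..x} \<inter> space \<mu> \<in> sets \<mu>"
      using real_of_ereal by (rule measurable_sets) simp
    show "{..ereal x} \<in> sets \<mu>" using \<mu> by simp
  qed
  finally show ?thesis .
qed

section \<open>Trees of independent labels\<close>

definition subtree :: "nat \<Rightarrow> (nat list \<Rightarrow> 'a) \<Rightarrow> nat list \<Rightarrow> 'a" where
  "subtree j \<omega> = (\<lambda>v. \<omega> (j # v))"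

definition graft :: "'a \<times> (nat \<Rightarrow> nat list \<Rightarrow> 'a) \<Rightarrow> nat list \<Rightarrow> 'a" where
  "graft z w = (case w of [] \<Rightarrow> fst z | j # v \<Rightarrow> snd z j v)"

lemma graft_simps [simp]: "graft z [] = fst z" "graft z (j # v) = snd z j v"
  by (simp_all add: graft_def)

lemma subtree_graft [simp]: "subtree j (graft z) = snd z j"
  by (simp add: subtree_def fun_eq_iff)

lemma measurable_subtree [measurable]:
  "subtree j \<in> measurable (PiM UNIV (\<lambda>_::nat list. P)) (PiM UNIV (\<lambda>_::nat list. P))"
  unfolding subtree_def by (rule measurable_PiM_single') (auto simp: space_PiM PiE_iff)

lemma measurable_graft:
  "graft \<in> measurable (P \<Otimes>\<^sub>M PiM UNIV (\<lambda>_::nat. PiM UNIV (\<lambda>_::nat list. P)))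
                     (PiM UNIV (\<lambda>_::nat list. P))"
proof (rule measurable_PiM_single')
  fix w :: "nat list"
  show "(\<lambda>z. graft z w) \<in> measurable (P \<Otimes>\<^sub>M PiM UNIV (\<lambda>_::nat. PiM UNIV (\<lambda>_::nat list. P))) P"
  proof (cases w)
    case (Cons j v)
    have "(\<lambda>Y. Y j v) \<in> measurable (PiM UNIV (\<lambda>_::nat. PiM UNIV (\<lambda>_::nat list. P))) P"
      by (rule measurable_compose[of "\<lambda>Y. Y j" _ "PiM UNIV (\<lambda>_::nat list. P)"]) simp_all
    then show ?thesis using Cons by (simp add: measurable_compose[OF measurable_snd])
  qed simp
qed (auto simp: space_pair_measure space_PiM PiE_iff graft_def split: list.splits)

lemma prod_split_Cons:
  fixes g :: "'a list \<Rightarrow> 'b::comm_monoid_mult"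
  assumes J: "finite J"
  shows "(\<Prod>w\<in>J. g w) = (if [] \<in> J then g [] else 1) *
    (\<Prod>j\<in>hd ` (J - {[]}). \<Prod>v\<in>{v. j # v \<in> J}. g (j # v))"
proof -
  define K where "K = (SIGMA j:hd ` (J - {[]}). {v. j # v \<in> J})"
  have fin: "finite {v. j # v \<in> J}" for j
  proof -
    have "{v. j # v \<in> J} = Cons j -` J" by auto
    then show ?thesis using J by (simp add: finite_vimageI)
  qed
  have J_Cons: "J - {[]} = (\<lambda>(j, v). j # v) ` K"
  proof (intro set_eqI iffI)
    fix w assume "w \<in> J - {[]}"
    then show "w \<in> (\<lambda>(j, v). j # v) ` K"
      unfolding K_def by (cases w) (auto intro!: image_eqI[where x="(hd w, tl w)"])
  qed (auto simp: K_def)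
  have "(\<Prod>w\<in>J - {[]}. g w) = (\<Prod>(j, v)\<in>K. g (j # v))"
    unfolding J_Cons by (subst prod.reindex) (auto simp: inj_on_def split_beta comp_def)
  also have "\<dots> = (\<Prod>j\<in>hd ` (J - {[]}). \<Prod>v\<in>{v. j # v \<in> J}. g (j # v))"
    unfolding K_def using J fin by (subst prod.Sigma) auto
  finally show ?thesis
    using J by (auto simp: prod.remove)
qed

lemma graft_vimage_prod_emb:
  fixes P :: "'a measure" and J :: "nat list set"
  defines "Q \<equiv> P \<Otimes>\<^sub>M PiM UNIV (\<lambda>_::nat. PiM UNIV (\<lambda>_::nat list. P))"
  assumes A: "\<And>w. w \<in> J \<Longrightarrow> A w \<in> sets P"
  shows "graft -` prod_emb UNIV (\<lambda>_. P) J (Pi\<^sub>E J A) \<inter> space Q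
    = (if [] \<in> J then A [] else space P)
      \<times> prod_emb UNIV (\<lambda>_. PiM UNIV (\<lambda>_. P)) (hd ` (J - {[]}))
          (\<Pi>\<^sub>E j\<in>hd ` (J - {[]}). prod_emb UNIV (\<lambda>_. P) {v. j # v \<in> J} (\<Pi>\<^sub>E v\<in>{v. j # v \<in> J}. A (j # v)))"
    (is "?L = ?B0 \<times> ?S")
proof (intro set_eqI iffI)
  fix z assume "z \<in> ?L"
  then show "z \<in> ?B0 \<times> ?S"
    by (cases z) (auto simp: Q_def prod_emb_def PiE_iff space_pair_measure space_PiM)
next
  fix z assume z: "z \<in> ?B0 \<times> ?S"
  have "graft z w \<in> A w" if "w \<in> J" for w
    using z that by (cases w; cases z) (force simp: prod_emb_def PiE_iff)+
  moreover have "z \<in> space Q"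
    using z A sets.sets_into_space
    by (cases z) (auto simp: Q_def space_pair_measure prod_emb_def space_PiM split: if_splits)
  moreover then have "graft z \<in> space (PiM UNIV (\<lambda>_::nat list. P))"
    using measurable_space[OF measurable_graft] unfolding Q_def by blast
  ultimately show "z \<in> ?L"
    by (auto simp: prod_emb_def PiE_iff space_PiM)
qed

lemma distr_graft:
  assumes P: "prob_space P"
  shows "distr (P \<Otimes>\<^sub>M PiM UNIV (\<lambda>_::nat. PiM UNIV (\<lambda>_::nat list. P))) (PiM UNIV (\<lambda>_::nat list. P)) graft
    = PiM UNIV (\<lambda>_::nat list. P)"
proof (rule measure_eqI_PiM_infinite[symmetric])
  let ?T = "PiM UNIV (\<lambda>_::nat list. P)"
  let ?Ts = "PiM UNIV (\<lambda>_::nat. ?T)"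
  interpret P: prob_space P by fact
  interpret T: prob_space ?T using P by (rule prob_space_PiM)
  interpret Ts: prob_space ?Ts by (rule prob_space_PiM) (rule T.prob_space_axioms)
  show "finite_measure ?T" by unfold_locales
  fix A and J :: "nat list set"
  assume J: "finite J" and A: "\<And>w. w \<in> J \<Longrightarrow> A w \<in> sets P"
  define J1 where "J1 = hd ` (J - {[]})"
  define C where "C j = prod_emb UNIV (\<lambda>_. P) {v. j # v \<in> J} (\<Pi>\<^sub>E v\<in>{v. j # v \<in> J}. A (j # v))" for j
  have fin: "finite J1" "finite {v. j # v \<in> J}" for j
  proof -
    have "{v. j # v \<in> J} = Cons j -` J" by auto
    then show "finite J1" "finite {v. j # v \<in> J}" using J by (simp_all add: J1_def finite_vimageI)
  qed
  have B0: "(if [] \<in> J then A [] else space P) \<in> sets P" using A by auto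
  have C: "C j \<in> sets ?T" for j using A fin by (auto simp: C_def intro!: sets_PiM_I)
  have S: "prod_emb UNIV (\<lambda>_. ?T) J1 (Pi\<^sub>E J1 C) \<in> sets ?Ts"
    using C fin by (auto intro!: sets_PiM_I)
  have "emeasure (distr (P \<Otimes>\<^sub>M ?Ts) ?T graft) (prod_emb UNIV (\<lambda>_. P) J (Pi\<^sub>E J A))
      = emeasure (P \<Otimes>\<^sub>M ?Ts) ((if [] \<in> J then A [] else space P) \<times> prod_emb UNIV (\<lambda>_. ?T) J1 (Pi\<^sub>E J1 C))"
    using J A
    by (subst emeasure_distr)
       (auto intro!: sets_PiM_I measurable_graft simp: graft_vimage_prod_emb J1_def C_def[abs_def])
  also have "\<dots> = emeasure P (if [] \<in> J then A [] else space P) * (\<Prod>j\<in>J1. emeasure ?T (C j))"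
    using B0 S C fin by (simp add: Ts.emeasure_pair_measure_Times emeasure_PiM_emb T.prob_space_axioms)
  also have "\<dots> = (if [] \<in> J then emeasure P (A []) else 1)
      * (\<Prod>j\<in>J1. \<Prod>v\<in>{v. j # v \<in> J}. emeasure P (A (j # v)))"
  proof -
    have "emeasure ?T (C j) = (\<Prod>v\<in>{v. j # v \<in> J}. emeasure P (A (j # v)))" for j
      unfolding C_def using fin A by (intro emeasure_PiM_emb P) auto
    then show ?thesis by (simp add: P.emeasure_space_1)
  qed
  also have "\<dots> = (\<Prod>w\<in>J. emeasure P (A w))"
    unfolding J1_def by (rule prod_split_Cons[OF J, symmetric])
  also have "\<dots> = emeasure ?T (prod_emb UNIV (\<lambda>_. P) J (Pi\<^sub>E J A))"
    using J A by (intro emeasure_PiM_emb[symmetric] P) auto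
  finally show "emeasure ?T (prod_emb UNIV (\<lambda>_. P) J (Pi\<^sub>E J A))
      = emeasure (distr (P \<Otimes>\<^sub>M ?Ts) ?T graft) (prod_emb UNIV (\<lambda>_. P) J (Pi\<^sub>E J A))" ..
qed simp_all

lemma nn_integral_graft:
  fixes P :: "'a measure"
  defines "T \<equiv> PiM UNIV (\<lambda>_::nat list. P)"
  assumes P: "prob_space P" and h: "h \<in> borel_measurable T"
  shows "(\<integral>\<^sup>+ \<omega>. h \<omega> \<partial>T) = (\<integral>\<^sup>+ z. h (graft z) \<partial>(P \<Otimes>\<^sub>M PiM UNIV (\<lambda>_::nat. T)))"
proof -
  have "(\<integral>\<^sup>+ \<omega>. h \<omega> \<partial>T) = (\<integral>\<^sup>+ \<omega>. h \<omega> \<partial>distr (P \<Otimes>\<^sub>M PiM UNIV (\<lambda>_::nat. T)) T graft)"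
    unfolding T_def by (simp only: distr_graft[OF P])
  also have "\<dots> = (\<integral>\<^sup>+ z. h (graft z) \<partial>(P \<Otimes>\<^sub>M PiM UNIV (\<lambda>_::nat. T)))"
    using h unfolding T_def by (intro nn_integral_distr measurable_graft) simp
  finally show ?thesis .
qed

lemma SUP_Collect_if_bot:
  fixes h :: "'b \<Rightarrow> 'a::complete_lattice"
  shows "(SUP i\<in>{i. P i}. h i) = (SUP i. if P i then h i else \<bottom>)"
proof (rule antisym)
  show "(SUP i\<in>{i. P i}. h i) \<le> (SUP i. if P i then h i else \<bottom>)"
  proof (rule SUP_least)
    fix i assume "i \<in> {i. P i}"
    then show "h i \<le> (SUP i. if P i then h i else \<bottom>)" by (intro SUP_upper2[of i]) auto
  qed
  show "(SUP i. if P i then h i else \<bottom>) \<le> (SUP i\<in>{i. P i}. h i)"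
    by (rule SUP_least) (auto intro: SUP_upper)
qed

lemma rde_map_unrestricted:
  "rde_map f X = max 0 (SUP i. if enat i < fst f then X i + ereal (snd f i) else -\<infinity>)"
  unfolding rde_map_def SUP_Collect_if_bot bot_ereal_def ..

lemma rde_map_nonneg: "0 \<le> rde_map f X"
  by (simp add: rde_map_def)

lemma rde_map_mono:
  assumes "\<And>j. enat j < fst f \<Longrightarrow> X j \<le> Y j"
  shows "rde_map f X \<le> rde_map f Y"
  unfolding rde_map_def
  by (intro max.mono order.refl SUP_mono) (auto intro!: add_right_mono assms)

lemma rde_map_cong:
  assumes "\<And>j. enat j < fst f \<Longrightarrow> X j = Y j"
  shows "rde_map f X = rde_map f Y"
  by (intro antisym rde_map_mono) (auto simp: assms)

lemma rde_map_upper: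
  assumes "enat j < fst f"
  shows "X j + ereal (snd f j) \<le> rde_map f X"
  unfolding rde_map_def using assms by (auto intro!: SUP_upper2 simp: le_max_iff_disj)

lemma measurable_rde_map:
  assumes F: "sets F = sets family_space" and f: "f \<in> measurable M F"
    and X: "\<And>i. (\<lambda>x. X x i) \<in> borel_measurable M"
  shows "(\<lambda>x. rde_map (f x) (X x)) \<in> borel_measurable M"
proof -
  have [measurable]: "(\<lambda>x. fst (f x)) \<in> measurable M (count_space UNIV)"
    "(\<lambda>x. snd (f x) i) \<in> borel_measurable M" for i
    using f unfolding measurable_cong_sets[OF refl F] family_space_def by measurable
  note X [measurable]
  show ?thesis unfolding rde_map_unrestricted by measurable
qed

locale family_law =
  fixes F :: "family measure"
  assumes prob_space_F: "prob_space F" and sets_F: "sets F = sets family_space"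
begin

lemma prob_space_brw_space: "prob_space (brw_space F)"
  unfolding brw_space_def by (intro prob_space_PiM prob_space_F)

lemma measurable_fst_F [measurable]: "fst \<in> measurable F (count_space UNIV)"
  by (subst measurable_cong_sets[OF sets_F refl]) (simp add: family_space_def)

lemma measurable_snd_F [measurable]: "(\<lambda>f. snd f i) \<in> borel_measurable F"
  by (subst measurable_cong_sets[OF sets_F refl]) (simp add: family_space_def)

lemma measurable_rde_map_pair:
  "(\<lambda>(f, X). rde_map f X) \<in> borel_measurable (F \<Otimes>\<^sub>M PiM UNIV (\<lambda>_::nat. (borel :: ereal measure)))"
  unfolding split_beta' by (rule measurable_rde_map[OF sets_F]) measurable

lemma distr_rde_map_subtrees:
  fixes P :: "'a measure"
  defines "T \<equiv> PiM UNIV (\<lambda>_::nat list. P)"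
  assumes P: "prob_space P" and g: "g \<in> measurable P F" "distr P F g = F"
    and \<Psi>: "\<Psi> \<in> borel_measurable T"
  shows "distr T borel (\<lambda>z. rde_map (g (z [])) (\<lambda>j. \<Psi> (subtree j z))) = T_op F (distr T borel \<Psi>)"
proof -
  let ?Ts = "PiM UNIV (\<lambda>_::nat. T)"
  let ?Y = "PiM UNIV (\<lambda>_::nat. (borel :: ereal measure))"
  let ?h = "\<lambda>(x, Ys). (g x, \<lambda>j. \<Psi> (Ys j))"
  interpret T: prob_space T unfolding T_def using P by (rule prob_space_PiM)
  interpret Ts: prob_space ?Ts by (rule prob_space_PiM) (rule T.prob_space_axioms)
  have [measurable]: "g \<in> measurable P F" "\<Psi> \<in> borel_measurable T" using g \<Psi> by auto
  have subtrees: "(\<lambda>Ys j. \<Psi> (Ys j)) \<in> measurable ?Ts ?Y"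
    by (rule measurable_PiM_single') (auto simp: space_PiM)
  have subtrees_law: "distr ?Ts ?Y (\<lambda>Ys j. \<Psi> (Ys j)) = PiM UNIV (\<lambda>_::nat. distr T borel \<Psi>)"
    by (rule distr_PiM_map) (auto intro: T.prob_space_axioms)
  have h: "?h \<in> measurable (P \<Otimes>\<^sub>M ?Ts) (F \<Otimes>\<^sub>M ?Y)"
    unfolding split_beta' using subtrees by measurable
  have "F \<Otimes>\<^sub>M PiM UNIV (\<lambda>_::nat. distr T borel \<Psi>) = distr (P \<Otimes>\<^sub>M ?Ts) (F \<Otimes>\<^sub>M ?Y) ?h"
    unfolding subtrees_law[symmetric]
  proof (subst g(2)[symmetric], rule pair_measure_distr[OF g(1) subtrees])
    show "sigma_finite_measure (distr ?Ts ?Y (\<lambda>Ys j. \<Psi> (Ys j)))"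
      unfolding subtrees_law
      by (intro prob_space_imp_sigma_finite prob_space_PiM T.prob_space_distr \<Psi>)
  qed
  then have "T_op F (distr T borel \<Psi>) = distr (distr (P \<Otimes>\<^sub>M ?Ts) (F \<Otimes>\<^sub>M ?Y) ?h) borel (\<lambda>(f, X). rde_map f X)"
    unfolding T_op_def by simp
  also have "\<dots> = distr (P \<Otimes>\<^sub>M ?Ts) borel ((\<lambda>(f, X). rde_map f X) \<circ> ?h)"
    by (rule distr_distr[OF measurable_rde_map_pair h])
  also have "\<dots> = distr (P \<Otimes>\<^sub>M ?Ts) borel ((\<lambda>z. rde_map (g (z [])) (\<lambda>j. \<Psi> (subtree j z))) \<circ> graft)"
    by (simp add: comp_def split_beta')
  also have "\<dots> = distr (distr (P \<Otimes>\<^sub>M ?Ts) T graft) borel (\<lambda>z. rde_map (g (z [])) (\<lambda>j. \<Psi> (subtree j z)))"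
    unfolding T_def
    by (rule distr_distr[symmetric, OF measurable_rde_map[OF sets_F] measurable_graft])
       (use \<Psi>[unfolded T_def] in \<open>simp_all add: measurable_compose[OF measurable_subtree]\<close>)
  finally show ?thesis
    unfolding T_def distr_graft[OF P] ..
qed

end

section \<open>Positions in the family tree\<close>

lemma alive_Cons: "alive \<omega> (j # w) \<longleftrightarrow> enat j < fst (\<omega> []) \<and> alive (subtree j \<omega>) w"
  by (simp add: subtree_def)

lemma pos_Cons: "pos \<omega> (j # w) = snd (\<omega> []) j + pos (subtree j \<omega>) w"
  by (simp add: subtree_def)

declare alive.simps(2) [simp del] pos.simps(2) [simp del]

lemma alive_appendD: "alive \<omega> (u @ v) \<Longrightarrow> alive \<omega> u"
  by (induction u arbitrary: \<omega>) (auto simp: alive_Cons)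

lemma alive_take: "alive \<omega> w \<Longrightarrow> alive \<omega> (take n w)"
  using alive_appendD[of \<omega> "take n w" "drop n w"] by simp

lemma length_less_if_generation_empty:
  assumes "\<not> (\<exists>w. alive \<omega> w \<and> length w = n)" "alive \<omega> w"
  shows "length w < n"
  using assms alive_take[of \<omega> w n] by (metis length_take min.absorb2 not_less)

lemma pos_le_allmax: "alive \<omega> w \<Longrightarrow> ereal (pos \<omega> w) \<le> allmax \<omega>"
  unfolding allmax_def by (rule SUP_upper) simp

lemma allmax_nonneg: "0 \<le> allmax \<omega>"
  using pos_le_allmax[of \<omega> "[]"] by (simp add: zero_ereal_def)

lemma pos_le_rde_map:
  assumes "alive \<omega> (j # w)" "ereal (pos (subtree j \<omega>) w) \<le> X j"
  shows "ereal (pos \<omega> (j # w)) \<le> rde_map (\<omega> []) X"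
proof -
  have "ereal (pos \<omega> (j # w)) = ereal (pos (subtree j \<omega>) w) + ereal (snd (\<omega> []) j)"
    by (simp add: pos_Cons)
  also have "\<dots> \<le> X j + ereal (snd (\<omega> []) j)"
    using assms(2) by (rule add_right_mono)
  also have "\<dots> \<le> rde_map (\<omega> []) X"
    using assms(1) by (intro rde_map_upper) (simp add: alive_Cons)
  finally show ?thesis .
qed

lemma allmax_rec: "allmax \<omega> = rde_map (\<omega> []) (\<lambda>j. allmax (subtree j \<omega>))"
proof (rule antisym)
  show "allmax \<omega> \<le> rde_map (\<omega> []) (\<lambda>j. allmax (subtree j \<omega>))"
    unfolding allmax_def[of \<omega>]
  proof (rule SUP_least)
    fix w assume "w \<in> {w. alive \<omega> w}"
    then show "ereal (pos \<omega> w) \<le> rde_map (\<omega> []) (\<lambda>j. allmax (subtree j \<omega>))"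
      by (cases w)
         (auto simp: rde_map_nonneg alive_Cons zero_ereal_def[symmetric] intro!: pos_le_rde_map pos_le_allmax)
  qed
  have "allmax (subtree j \<omega>) + ereal (snd (\<omega> []) j) \<le> allmax \<omega>" if j: "enat j < fst (\<omega> [])" for j
  proof -
    have "allmax (subtree j \<omega>) + ereal (snd (\<omega> []) j)
        = (SUP v\<in>{v. alive (subtree j \<omega>) v}. ereal (pos (subtree j \<omega>) v) + ereal (snd (\<omega> []) j))"
      unfolding allmax_def by (rule SUP_ereal_add_left[symmetric]) (auto intro: exI[of _ "[]"])
    also have "\<dots> \<le> allmax \<omega>"
      using j pos_le_allmax[of \<omega> "j # _"]
      by (intro SUP_least) (auto simp: pos_Cons alive_Cons add.commute)
    finally show ?thesis .
  qed
  then show "rde_map (\<omega> []) (\<lambda>j. allmax (subtree j \<omega>)) \<le> allmax \<omega>"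
    unfolding rde_map_def by (auto intro!: SUP_least allmax_nonneg)
qed

text \<open>The maximum of 0 and the positions in generations 1, ..., n.\<close>
fun allmax_upto :: "nat \<Rightarrow> (nat list \<Rightarrow> family) \<Rightarrow> ereal" where
  "allmax_upto 0 \<omega> = 0"
| "allmax_upto (Suc n) \<omega> = rde_map (\<omega> []) (\<lambda>j. allmax_upto n (subtree j \<omega>))"

lemma allmax_upto_nonneg: "0 \<le> allmax_upto n \<omega>"
  by (cases n) (auto simp: rde_map_nonneg)

lemma allmax_upto_le_allmax: "allmax_upto n \<omega> \<le> allmax \<omega>"
proof (induction n arbitrary: \<omega>)
  case (Suc n)
  then show ?case by (subst allmax_rec) (auto intro: rde_map_mono)
qed (simp add: allmax_nonneg)

lemma incseq_allmax_upto: "incseq (\<lambda>n. allmax_upto n \<omega>)"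
proof -
  have "allmax_upto n \<omega> \<le> allmax_upto (Suc n) \<omega>" for n
  proof (induction n arbitrary: \<omega>)
    case (Suc n)
    then show ?case by (simp only: allmax_upto.simps(2)) (intro rde_map_mono)
  qed (simp add: rde_map_nonneg)
  then show ?thesis by (rule incseq_SucI)
qed

lemma pos_le_allmax_upto: "alive \<omega> w \<Longrightarrow> ereal (pos \<omega> w) \<le> allmax_upto (length w) \<omega>"
proof (induction w arbitrary: \<omega>)
  case (Cons j w)
  then show ?case by (auto simp: alive_Cons intro!: pos_le_rde_map)
qed simp

lemma allmax_eq_SUP_allmax_upto: "allmax \<omega> = (SUP n. allmax_upto n \<omega>)"
proof (rule antisym)
  show "allmax \<omega> \<le> (SUP n. allmax_upto n \<omega>)"
    unfolding allmax_def
  proof (rule SUP_least)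
    fix w assume "w \<in> {w. alive \<omega> w}"
    then have "ereal (pos \<omega> w) \<le> allmax_upto (length w) \<omega>" by (intro pos_le_allmax_upto) simp
    also have "\<dots> \<le> (SUP n. allmax_upto n \<omega>)" by (rule SUP_upper) simp
    finally show "ereal (pos \<omega> w) \<le> (SUP n. allmax_upto n \<omega>)" .
  qed
qed (intro SUP_least allmax_upto_le_allmax)

lemma allmax_upto_eq_allmax:
  assumes "\<not> (\<exists>w. alive \<omega> w \<and> length w = n)"
  shows "allmax_upto n \<omega> = allmax \<omega>"
proof (rule antisym)
  show "allmax \<omega> \<le> allmax_upto n \<omega>"
    unfolding allmax_def
  proof (rule SUP_least)
    fix w assume "w \<in> {w. alive \<omega> w}"
    then have "alive \<omega> w" "length w < n" using length_less_if_generation_empty[OF assms] by auto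
    then show "ereal (pos \<omega> w) \<le> allmax_upto n \<omega>"
      using incseq_allmax_upto[of \<omega>]
      by (auto intro: order.trans[OF pos_le_allmax_upto] simp: incseq_def)
  qed
qed (rule allmax_upto_le_allmax)

definition families :: "(nat list \<Rightarrow> family \<times> ereal) \<Rightarrow> nat list \<Rightarrow> family" where
  "families z = (\<lambda>w. fst (z w))"

lemma families_Nil [simp]: "families z [] = fst (z [])"
  by (simp add: families_def)

lemma families_subtree: "families (subtree j z) = subtree j (families z)"
  by (simp add: families_def subtree_def)

text \<open>The labels snd (z w) are attached to all words w of length n, alive or not, and the
  recursion is applied n times; only the labels of alive individuals matter.\<close>
fun rde_iterate :: "nat \<Rightarrow> (nat list \<Rightarrow> family \<times> ereal) \<Rightarrow> ereal" where
  "rde_iterate 0 z = snd (z [])"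
| "rde_iterate (Suc n) z = rde_map (fst (z [])) (\<lambda>j. rde_iterate n (subtree j z))"

lemma allmax_upto_le_rde_iterate:
  assumes "\<forall>w. 0 \<le> snd (z w)"
  shows "allmax_upto n (families z) \<le> rde_iterate n z"
  using assms
proof (induction n arbitrary: z)
  case (Suc n)
  then have "\<forall>w. 0 \<le> snd (subtree j z w)" for j by (simp add: subtree_def)
  with Suc.IH show ?case
    by (simp only: allmax_upto.simps rde_iterate.simps families_Nil)
       (auto intro!: rde_map_mono simp: families_subtree[symmetric])
qed simp

lemma rde_iterate_eq_allmax_upto:
  assumes "\<not> (\<exists>w. alive (families z) w \<and> length w = n)"
  shows "rde_iterate n z = allmax_upto n (families z)"
  using assms
proof (induction n arbitrary: z)
  case 0
  then show ?case by (auto intro: exI[of _ "[]"])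
next
  case (Suc n)
  have "\<not> (\<exists>w. alive (families (subtree j z)) w \<and> length w = n)" if j: "enat j < fst (fst (z []))" for j
  proof
    assume "\<exists>w. alive (families (subtree j z)) w \<and> length w = n"
    then obtain w where "alive (families (subtree j z)) w" "length w = n" by blast
    with j have "alive (families z) (j # w)" "length (j # w) = Suc n"
      by (auto simp: alive_Cons families_subtree)
    with Suc.prems show False by blast
  qed
  with Suc.IH show ?case
    by (simp only: allmax_upto.simps rde_iterate.simps families_Nil)
       (auto intro!: rde_map_cong simp: families_subtree[symmetric])
qed

text \<open>Unfolding the recursion along the path to w shows that every nonnegative solution X of the
  recursion on a fixed tree dominates pos w + X w at the root, hence dominates allmax.\<close>
lemma allmax_le_if_recursive:
  fixes D :: "nat list \<Rightarrow> family" and X :: "nat list \<Rightarrow> ereal"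
  assumes rec: "\<And>w. X w = rde_map (D w) (\<lambda>j. X (w @ [j]))"
    and nonneg: "\<And>w. 0 \<le> X w"
  shows "allmax D \<le> X []"
proof -
  have path: "ereal (pos (\<lambda>v. D (u @ v)) w) + X (u @ w) \<le> X u"
    if "alive (\<lambda>v. D (u @ v)) w" for u w
    using that
  proof (induction w arbitrary: u)
    case (Cons j w)
    have sub: "subtree j (\<lambda>v. D (u @ v)) = (\<lambda>v. D ((u @ [j]) @ v))"
      by (simp add: subtree_def)
    from Cons.prems have j: "enat j < fst (D u)" and w: "alive (\<lambda>v. D ((u @ [j]) @ v)) w"
      by (auto simp: alive_Cons sub)
    have "ereal (pos (\<lambda>v. D (u @ v)) (j # w)) + X (u @ j # w)
        = (ereal (pos (\<lambda>v. D ((u @ [j]) @ v)) w) + X ((u @ [j]) @ w)) + ereal (snd (D u) j)"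
      by (cases "X (u @ j # w)") (simp_all add: pos_Cons sub ac_simps)
    also have "\<dots> \<le> X (u @ [j]) + ereal (snd (D u) j)"
      using Cons.IH[OF w] by (rule add_right_mono)
    also have "\<dots> \<le> X u"
      using rde_map_upper[OF j, of "\<lambda>j. X (u @ [j])"] rec[of u] by simp
    finally show ?case .
  qed simp
  show ?thesis
    unfolding allmax_def
  proof (rule SUP_least)
    fix w assume "w \<in> {w. alive D w}"
    then have "ereal (pos D w) + X w \<le> X []" using path[of "[]" w] by simp
    then show "ereal (pos D w) \<le> X []"
      using nonneg[of w] by (meson add_increasing2 order.refl order.trans)
  qed
qed

context family_law
begin

lemma measurable_root: "(\<lambda>\<omega>. \<omega> []) \<in> measurable (brw_space F) F"
  unfolding brw_space_def by simp

lemma measurable_subtree_brw: "subtree j \<in> measurable (brw_space F) (brw_space F)"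
  unfolding brw_space_def by (rule measurable_subtree)

lemma measurable_alive: "Measurable.pred (brw_space F) (\<lambda>\<omega>. alive \<omega> w)"
proof (induction w)
  case (Cons j w)
  have "Measurable.pred (brw_space F) (\<lambda>\<omega>. enat j < fst (\<omega> []))"
    using measurable_root by measurable
  moreover have "Measurable.pred (brw_space F) (\<lambda>\<omega>. alive (subtree j \<omega>) w)"
    by (rule measurable_compose[OF measurable_subtree_brw Cons])
  ultimately show ?case unfolding alive_Cons by measurable
qed simp

lemma measurable_pos: "(\<lambda>\<omega>. pos \<omega> w) \<in> borel_measurable (brw_space F)"
proof (induction w)
  case (Cons j w)
  have "(\<lambda>\<omega>. snd (\<omega> []) j) \<in> borel_measurable (brw_space F)"
    using measurable_root by measurable
  moreover have "(\<lambda>\<omega>. pos (subtree j \<omega>) w) \<in> borel_measurable (brw_space F)"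
    by (rule measurable_compose[OF measurable_subtree_brw Cons])
  ultimately show ?case unfolding pos_Cons by measurable
qed simp

lemma measurable_allmax: "allmax \<in> borel_measurable (brw_space F)"
proof -
  note measurable_alive [measurable] measurable_pos [measurable]
  have "allmax = (\<lambda>\<omega>. SUP w. if alive \<omega> w then ereal (pos \<omega> w) else -\<infinity>)"
    unfolding allmax_def[abs_def] SUP_Collect_if_bot bot_ereal_def ..
  also have "\<dots> \<in> borel_measurable (brw_space F)" by measurable
  finally show ?thesis .
qed

lemma measurable_allmax_upto: "allmax_upto n \<in> borel_measurable (brw_space F)"
proof (induction n)
  case (Suc n)
  have "(\<lambda>\<omega>. rde_map (\<omega> []) (\<lambda>j. allmax_upto n (subtree j \<omega>))) \<in> borel_measurable (brw_space F)"
    by (rule measurable_rde_map[OF sets_F measurable_root])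
       (rule measurable_compose[OF measurable_subtree_brw Suc])
  then show ?case by simp
qed simp

lemma prob_space_lawR: "prob_space (lawR F)"
  unfolding lawR_def
  by (rule prob_space.prob_space_distr[OF prob_space_brw_space measurable_allmax])

lemma sets_lawR [simp]: "sets (lawR F) = sets borel"
  by (simp add: lawR_def)

lemma T_op_lawR: "T_op F (lawR F) = lawR F"
proof -
  have "distr (brw_space F) borel (\<lambda>\<omega>. rde_map (\<omega> []) (\<lambda>j. allmax (subtree j \<omega>)))
      = T_op F (lawR F)"
    unfolding lawR_def brw_space_def
    by (rule distr_rde_map_subtrees[OF prob_space_F measurable_ident_sets[OF refl] distr_id
          measurable_allmax[unfolded brw_space_def]])
  moreover have "distr (brw_space F) borel allmax
      = distr (brw_space F) borel (\<lambda>\<omega>. rde_map (\<omega> []) (\<lambda>j. allmax (subtree j \<omega>)))"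
    by (intro distr_cong refl) (rule allmax_rec)
  ultimately show ?thesis
    unfolding lawR_def by simp
qed

lemma T_op_power_return_0: "(T_op F ^^ n) (return borel 0) = distr (brw_space F) borel (allmax_upto n)"
proof (induction n)
  case 0
  interpret prob_space "brw_space F" by (rule prob_space_brw_space)
  have "allmax_upto 0 = (\<lambda>_. 0)" by (rule ext) simp
  then show ?case by simp
next
  case (Suc n)
  have "distr (brw_space F) borel (\<lambda>\<omega>. rde_map (\<omega> []) (\<lambda>j. allmax_upto n (subtree j \<omega>)))
      = T_op F (distr (brw_space F) borel (allmax_upto n))"
    unfolding brw_space_def
    by (rule distr_rde_map_subtrees[OF prob_space_F measurable_ident_sets[OF refl] distr_id
          measurable_allmax_upto[unfolded brw_space_def]])
  then show ?case using Suc by simp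
qed


abbreviation labelled_space :: "ereal measure \<Rightarrow> (nat list \<Rightarrow> family \<times> ereal) measure" where
  "labelled_space \<mu> \<equiv> PiM UNIV (\<lambda>_::nat list. F \<Otimes>\<^sub>M \<mu>)"

lemma measurable_families: "families \<in> measurable (labelled_space \<mu>) (brw_space F)"
  unfolding families_def brw_space_def
  by (rule measurable_PiM_single') (auto simp: space_PiM space_pair_measure PiE_iff mem_Times_iff)

lemma distr_families:
  assumes "prob_space \<mu>"
  shows "distr (labelled_space \<mu>) (brw_space F) families = brw_space F"
proof -
  interpret \<mu>: prob_space \<mu> by fact
  have "distr (labelled_space \<mu>) (brw_space F) (\<lambda>z w. fst (z w))
      = PiM UNIV (\<lambda>_::nat list. distr (F \<Otimes>\<^sub>M \<mu>) F fst)"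
    unfolding brw_space_def
    by (intro distr_PiM_map prob_space_pair prob_space_F assms) simp
  then show ?thesis
    by (simp add: families_def[abs_def] \<mu>.distr_pair_fst brw_space_def)
qed

lemma lawR_eq_distr_families:
  assumes "prob_space \<mu>"
  shows "lawR F = distr (labelled_space \<mu>) borel (\<lambda>z. allmax (families z))"
proof -
  have "lawR F = distr (distr (labelled_space \<mu>) (brw_space F) families) borel allmax"
    unfolding lawR_def distr_families[OF assms] ..
  also have "\<dots> = distr (labelled_space \<mu>) borel (allmax \<circ> families)"
    by (rule distr_distr[OF measurable_allmax measurable_families])
  finally show ?thesis by (simp add: comp_def)
qed

lemma measurable_rde_iterate:
  assumes "sets \<mu> = sets borel"
  shows "rde_iterate n \<in> borel_measurable (labelled_space \<mu>)"
proof (induction n)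
  case 0
  have "snd \<in> borel_measurable (F \<Otimes>\<^sub>M \<mu>)"
    by (subst measurable_cong_sets[OF refl assms[symmetric]]) (rule measurable_snd)
  then show ?case by simp
next
  case (Suc n)
  have "(\<lambda>z. rde_map (fst (z [])) (\<lambda>j. rde_iterate n (subtree j z))) \<in> borel_measurable (labelled_space \<mu>)"
    by (rule measurable_rde_map[OF sets_F]) (simp_all add: measurable_compose[OF measurable_subtree Suc])
  then show ?case by simp
qed

lemma T_op_power_eq_distr_rde_iterate:
  assumes \<mu>: "prob_space \<mu>" "sets \<mu> = sets borel"
  shows "(T_op F ^^ n) \<mu> = distr (labelled_space \<mu>) borel (rde_iterate n)"
proof (induction n)
  case 0
  interpret \<mu>: prob_space \<mu> by fact
  interpret F: prob_space F by (rule prob_space_F)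
  have snd: "snd \<in> borel_measurable (F \<Otimes>\<^sub>M \<mu>)"
    by (subst measurable_cong_sets[OF refl \<mu>(2)[symmetric]]) (rule measurable_snd)
  have "rde_iterate 0 = snd \<circ> (\<lambda>z. z [])" by (rule ext) simp
  then have "distr (labelled_space \<mu>) borel (rde_iterate 0)
      = distr (distr (labelled_space \<mu>) (F \<Otimes>\<^sub>M \<mu>) (\<lambda>z. z [])) borel snd"
    by (simp add: distr_distr[OF snd])
  also have "distr (labelled_space \<mu>) (F \<Otimes>\<^sub>M \<mu>) (\<lambda>z. z []) = F \<Otimes>\<^sub>M \<mu>"
    by (rule distr_PiM_component) (simp_all add: prob_space_pair prob_space_F \<mu>(1))
  also have "distr (F \<Otimes>\<^sub>M \<mu>) borel snd = distr (F \<Otimes>\<^sub>M \<mu>) \<mu> snd"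
    by (rule distr_cong) (simp_all add: \<mu>(2))
  also have "\<dots> = \<mu>"
    by (rule F.distr_pair_snd) (rule \<mu>.sigma_finite_measure_axioms)
  finally show ?case by simp
next
  case (Suc n)
  have "distr (labelled_space \<mu>) borel (\<lambda>z. rde_map (fst (z [])) (\<lambda>j. rde_iterate n (subtree j z)))
      = T_op F (distr (labelled_space \<mu>) borel (rde_iterate n))"
  proof (rule distr_rde_map_subtrees)
    show "prob_space (F \<Otimes>\<^sub>M \<mu>)" by (intro prob_space_pair prob_space_F \<mu>(1))
    show "distr (F \<Otimes>\<^sub>M \<mu>) F fst = F" by (rule prob_space.distr_pair_fst[OF \<mu>(1)])
  qed (simp_all add: measurable_rde_iterate[OF \<mu>(2)])
  then show ?case using Suc by simp
qed

lemma AE_labels_nonneg: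
  assumes "prob_space \<mu>" and nonneg: "AE y in \<mu>. 0 \<le> y"
  shows "AE z in labelled_space \<mu>. \<forall>w. 0 \<le> snd (z w)"
proof -
  interpret \<mu>: prob_space \<mu> by fact
  interpret F: prob_space F by (rule prob_space_F)
  have "AE y in distr (F \<Otimes>\<^sub>M \<mu>) \<mu> snd. 0 \<le> y"
    using nonneg by (subst F.distr_pair_snd[OF \<mu>.sigma_finite_measure_axioms])
  then have "AE p in F \<Otimes>\<^sub>M \<mu>. 0 \<le> snd p"
    by (rule AE_distrD[OF measurable_snd])
  then have "AE z in labelled_space \<mu>. 0 \<le> snd (z w)" for w
    by (intro AE_PiM_component[where P="\<lambda>p. 0 \<le> snd p"]) (simp_all add: prob_space_pair prob_space_F assms(1))
  then show ?thesis by (simp add: AE_all_countable)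
qed

end

section \<open>Finiteness of the overall maximum\<close>

definition child_weight :: "real \<Rightarrow> family \<Rightarrow> nat \<Rightarrow> ennreal" where
  "child_weight \<theta> f j = (if enat j < fst f then ennreal (exp (\<theta> * snd f j)) else 0)"

text \<open>The sum of exp(\<theta> pos w) over the individuals w of generation n.\<close>
fun generation_exp_sum :: "real \<Rightarrow> nat \<Rightarrow> (nat list \<Rightarrow> family) \<Rightarrow> ennreal" where
  "generation_exp_sum \<theta> 0 \<omega> = 1"
| "generation_exp_sum \<theta> (Suc n) \<omega> = (\<Sum>j. child_weight \<theta> (\<omega> []) j * generation_exp_sum \<theta> n (subtree j \<omega>))"

lemma exp_pos_le_generation_exp_sum:
  "alive \<omega> w \<Longrightarrow> ennreal (exp (\<theta> * pos \<omega> w)) \<le> generation_exp_sum \<theta> (length w) \<omega>"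
proof (induction w arbitrary: \<omega>)
  case (Cons j w)
  then have j: "enat j < fst (\<omega> [])" and w: "alive (subtree j \<omega>) w"
    by (auto simp: alive_Cons)
  have "ennreal (exp (\<theta> * pos \<omega> (j # w)))
      = ennreal (exp (\<theta> * snd (\<omega> []) j)) * ennreal (exp (\<theta> * pos (subtree j \<omega>) w))"
    by (simp add: pos_Cons distrib_left exp_add ennreal_mult)
  also have "\<dots> \<le> child_weight \<theta> (\<omega> []) j * generation_exp_sum \<theta> (length w) (subtree j \<omega>)"
    using j Cons.IH[OF w] by (simp add: child_weight_def mult_left_mono)
  also have "\<dots> \<le> (\<Sum>i. child_weight \<theta> (\<omega> []) i * generation_exp_sum \<theta> (length w) (subtree i \<omega>))"
    using sum_le_suminf[OF summableI, of "{j}"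
        "\<lambda>i. child_weight \<theta> (\<omega> []) i * generation_exp_sum \<theta> (length w) (subtree i \<omega>)"]
    by simp
  finally show ?case by simp
qed simp

lemma pos_le_ln_generation_exp_sum:
  assumes \<theta>: "\<theta> > 0" and finite: "generation_exp_sum \<theta> (length w) \<omega> \<noteq> \<infinity>" and w: "alive \<omega> w"
  shows "pos \<omega> w \<le> ln (enn2real (generation_exp_sum \<theta> (length w) \<omega>)) / \<theta>"
proof -
  let ?Z = "generation_exp_sum \<theta> (length w) \<omega>"
  have "exp (\<theta> * pos \<omega> w) \<le> enn2real ?Z"
    using exp_pos_le_generation_exp_sum[OF w, of \<theta>] finite
    by (metis enn2real_ennreal enn2real_mono exp_ge_zero infinity_ennreal_def less_top)
  then have "\<theta> * pos \<omega> w \<le> ln (enn2real ?Z)"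
    by (metis exp_gt_zero less_le_trans ln_exp ln_le_cancel_iff)
  with \<theta> show ?thesis by (simp add: field_simps)
qed

definition eventually_nonpositive :: "(nat list \<Rightarrow> family) \<Rightarrow> bool" where
  "eventually_nonpositive \<omega> \<longleftrightarrow> (\<exists>n0. \<forall>w. alive \<omega> w \<longrightarrow> n0 \<le> length w \<longrightarrow> pos \<omega> w \<le> 0)"

lemma eventually_nonpositive_if_extinct: "\<not> nonextinct \<omega> \<Longrightarrow> eventually_nonpositive \<omega>"
  unfolding nonextinct_def eventually_nonpositive_def
  by (metis length_less_if_generation_empty not_less)

lemma eventually_nonpositive_if_speed_negative:
  assumes \<gamma>: "\<gamma> < 0" and speed: "(\<lambda>n. rightmost \<omega> n / ereal (real n)) \<longlonglongrightarrow> ereal \<gamma>"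
  shows "eventually_nonpositive \<omega>"
proof -
  have "eventually (\<lambda>n. rightmost \<omega> n / ereal (real n) < 0) sequentially"
    using order_tendstoD(2)[OF speed] \<gamma> by simp
  then obtain n1 where n1: "\<And>n. n \<ge> n1 \<Longrightarrow> rightmost \<omega> n / ereal (real n) < 0"
    by (auto simp: eventually_sequentially)
  have "pos \<omega> w \<le> 0" if w: "alive \<omega> w" and long: "max n1 1 \<le> length w" for w
  proof (rule ccontr)
    assume "\<not> pos \<omega> w \<le> 0"
    then have "0 \<le> ereal (pos \<omega> w)" by simp
    also have "\<dots> \<le> rightmost \<omega> (length w)"
      unfolding rightmost_def using w by (intro SUP_upper) auto
    finally have "0 \<le> rightmost \<omega> (length w) / ereal (real (length w))"
      using long by simp
    with n1[of "length w"] long show False by simp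
  qed
  then show ?thesis unfolding eventually_nonpositive_def by blast
qed

lemma allmax_finite_if_eventually_nonpositive:
  assumes \<theta>: "\<theta> > 0" and finite: "\<And>n. generation_exp_sum \<theta> n \<omega> \<noteq> \<infinity>"
    and "eventually_nonpositive \<omega>"
  shows "allmax \<omega> < \<infinity>"
proof -
  obtain n0 where n0: "\<And>w. alive \<omega> w \<Longrightarrow> n0 \<le> length w \<Longrightarrow> pos \<omega> w \<le> 0"
    using assms(3) unfolding eventually_nonpositive_def by blast
  define b where "b n = \<bar>ln (enn2real (generation_exp_sum \<theta> n \<omega>)) / \<theta>\<bar>" for n
  have "pos \<omega> w \<le> (\<Sum>n<n0. b n)" if w: "alive \<omega> w" for w
  proof (cases "n0 \<le> length w")
    case True
    then show ?thesis using n0[OF w] by (smt (verit) b_def sum_nonneg abs_ge_zero)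
  next
    case False
    have "pos \<omega> w \<le> b (length w)"
      unfolding b_def by (rule order.trans[OF pos_le_ln_generation_exp_sum[OF \<theta> finite w] abs_ge_self])
    also have "\<dots> \<le> (\<Sum>n<n0. b n)"
      using False by (intro member_le_sum) (auto simp: b_def)
    finally show ?thesis .
  qed
  then have "allmax \<omega> \<le> ereal (\<Sum>n<n0. b n)"
    unfolding allmax_def by (intro SUP_least) simp
  then show ?thesis by (rule le_less_trans) simp
qed

context family_law
begin

lemma measurable_child_weight [measurable]: "(\<lambda>f. child_weight \<theta> f j) \<in> borel_measurable F"
  unfolding child_weight_def by measurable

lemma measurable_generation_exp_sum: "generation_exp_sum \<theta> n \<in> borel_measurable (brw_space F)"
proof (induction n)
  case (Suc n)
  note measurable_root [measurable]
  have [measurable]: "(\<lambda>\<omega>. generation_exp_sum \<theta> n (subtree j \<omega>)) \<in> borel_measurable (brw_space F)" for j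
    by (rule measurable_compose[OF measurable_subtree_brw Suc])
  show ?case by simp measurable
qed simp

lemma nn_integral_generation_exp_sum:
  "(\<integral>\<^sup>+ \<omega>. generation_exp_sum \<theta> n \<omega> \<partial>brw_space F) = (\<integral>\<^sup>+ f. (\<Sum>j. child_weight \<theta> f j) \<partial>F) ^ n"
proof (induction n)
  case 0
  interpret prob_space "brw_space F" by (rule prob_space_brw_space)
  show ?case by (simp add: emeasure_space_1)
next
  case (Suc n)
  let ?m = "\<integral>\<^sup>+ f. (\<Sum>j. child_weight \<theta> f j) \<partial>F"
  let ?Ts = "PiM UNIV (\<lambda>_::nat. brw_space F)"
  interpret T: prob_space "brw_space F" by (rule prob_space_brw_space)
  interpret Ts: prob_space ?Ts by (rule prob_space_PiM) (rule T.prob_space_axioms)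
  note measurable_generation_exp_sum [measurable]
  have subtree_sum: "(\<integral>\<^sup>+ Ys. (\<Sum>j. child_weight \<theta> f j * generation_exp_sum \<theta> n (Ys j)) \<partial>?Ts)
      = (\<Sum>j. child_weight \<theta> f j) * ?m ^ n" for f
  proof -
    have "(\<integral>\<^sup>+ Ys. (\<Sum>j. child_weight \<theta> f j * generation_exp_sum \<theta> n (Ys j)) \<partial>?Ts)
        = (\<Sum>j. child_weight \<theta> f j * (\<integral>\<^sup>+ Ys. generation_exp_sum \<theta> n (Ys j) \<partial>?Ts))"
      by (simp add: nn_integral_suminf nn_integral_cmult)
    also have "\<dots> = (\<Sum>j. child_weight \<theta> f j * ?m ^ n)"
      using Suc by (simp add: nn_integral_PiM_component T.prob_space_axioms)
    finally show ?thesis by simp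
  qed
  have "(\<integral>\<^sup>+ \<omega>. generation_exp_sum \<theta> (Suc n) \<omega> \<partial>brw_space F)
      = (\<integral>\<^sup>+ z. generation_exp_sum \<theta> (Suc n) (graft z) \<partial>(F \<Otimes>\<^sub>M ?Ts))"
    unfolding brw_space_def
    by (rule nn_integral_graft[OF prob_space_F measurable_generation_exp_sum[unfolded brw_space_def]])
  also have "\<dots> = (\<integral>\<^sup>+ z. (\<Sum>j. child_weight \<theta> (fst z) j * generation_exp_sum \<theta> n (snd z j)) \<partial>(F \<Otimes>\<^sub>M ?Ts))"
    by simp
  also have "\<dots> = (\<integral>\<^sup>+ f. \<integral>\<^sup>+ Ys. (\<Sum>j. child_weight \<theta> f j * generation_exp_sum \<theta> n (Ys j)) \<partial>?Ts \<partial>F)"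
    by (rule Ts.nn_integral_fst[symmetric, where f="\<lambda>z. \<Sum>j. child_weight \<theta> (fst z) j * generation_exp_sum \<theta> n (snd z j)", simplified])
       measurable
  also have "\<dots> = ?m * ?m ^ n"
    by (simp add: subtree_sum nn_integral_multc)
  finally show ?case by simp
qed

lemma AE_generation_exp_sum_finite:
  assumes "(\<integral>\<^sup>+ f. (\<Sum>j. child_weight \<theta> f j) \<partial>F) < \<infinity>"
  shows "AE \<omega> in brw_space F. \<forall>n. generation_exp_sum \<theta> n \<omega> \<noteq> \<infinity>"
proof -
  have "AE \<omega> in brw_space F. generation_exp_sum \<theta> n \<omega> \<noteq> \<infinity>" for n
    using assms
    by (intro nn_integral_noteq_infinite measurable_generation_exp_sum)
       (simp add: nn_integral_generation_exp_sum power_eq_top_ennreal_iff)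
  then show ?thesis by (simp add: AE_all_countable)
qed

lemma AE_allmax_finite:
  assumes \<theta>: "\<theta> > 0" "(\<integral>\<^sup>+ f. (\<Sum>j. child_weight \<theta> f j) \<partial>F) < \<infinity>"
    and eventually: "AE \<omega> in brw_space F. eventually_nonpositive \<omega>"
  shows "AE \<omega> in brw_space F. allmax \<omega> < \<infinity>"
  using AE_generation_exp_sum_finite[OF \<theta>(2)] eventually
  by eventually_elim (blast intro: allmax_finite_if_eventually_nonpositive[OF \<theta>(1)])

end

section \<open>The law of the overall maximum\<close>

lemma rde_solutionD:
  assumes "rde_solution F \<mu>"
  shows "prob_space \<mu>" "sets \<mu> = sets borel" "T_op F \<mu> = \<mu>" "AE y in \<mu>. 0 \<le> y"
proof -
  show \<mu>: "prob_space \<mu>" and sets: "sets \<mu> = sets borel" and "T_op F \<mu> = \<mu>"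
    using assms by (auto simp: rde_solution_def)
  interpret prob_space \<mu> by (rule \<mu>)
  have "prob {0..<\<infinity>} = 1"
    using assms sets by (simp add: rde_solution_def emeasure_eq_measure)
  then have "AE y in \<mu>. y \<in> {0..<\<infinity>}"
    using sets by (intro AE_prob_1) simp
  then show "AE y in \<mu>. 0 \<le> y" by eventually_elim auto
qed

context family_law
begin

lemma AE_lawR_nonneg: "AE y in lawR F. 0 \<le> y"
  unfolding lawR_def using measurable_allmax by (simp add: AE_distr_iff allmax_nonneg)

lemma rde_solution_lawR:
  assumes finite: "AE \<omega> in brw_space F. allmax \<omega> < \<infinity>"
  shows "rde_solution F (lawR F)"
  unfolding rde_solution_def
proof (intro conjI prob_space_lawR sets_lawR T_op_lawR)
  interpret prob_space "brw_space F" by (rule prob_space_brw_space)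
  have "emeasure (lawR F) {0..<\<infinity>} = emeasure (brw_space F) (allmax -` {0..<\<infinity>} \<inter> space (brw_space F))"
    unfolding lawR_def by (rule emeasure_distr[OF measurable_allmax]) simp
  also have "\<dots> = 1"
  proof (rule emeasure_eq_1_AE)
    show "allmax -` {0..<\<infinity>} \<inter> space (brw_space F) \<in> events"
      by (rule measurable_sets[OF measurable_allmax]) simp
    show "AE \<omega> in brw_space F. \<omega> \<in> allmax -` {0..<\<infinity>} \<inter> space (brw_space F)"
      using finite AE_space by eventually_elim (auto simp: allmax_nonneg)
  qed
  finally show "emeasure (lawR F) {0..<\<infinity>} = 1" .
qed

lemma solution_eq_distr_rde_iterate:
  assumes "rde_solution F \<mu>"
  shows "\<mu> = distr (labelled_space \<mu>) borel (rde_iterate n)"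
proof -
  have "(T_op F ^^ n) \<mu> = \<mu>"
    by (induction n) (simp_all add: rde_solutionD(3)[OF assms])
  then show ?thesis
    using T_op_power_eq_distr_rde_iterate[OF rde_solutionD(1,2)[OF assms]] by simp
qed

lemma survival_in_sets:
  "{z \<in> space (labelled_space \<mu>). \<exists>w. alive (families z) w \<and> length w = n} \<in> sets (labelled_space \<mu>)"
proof -
  have "Measurable.pred (brw_space F) (\<lambda>\<omega>. \<exists>w. alive \<omega> w \<and> length w = n)"
    by (intro pred_intros_countable pred_intros_logic measurable_alive) (simp add: pred_def)
  then have "Measurable.pred (labelled_space \<mu>) (\<lambda>z. \<exists>w. alive (families z) w \<and> length w = n)"
    by (intro pred_sets1[OF _ measurable_families]) (simp add: pred_def)
  then show ?thesis by (simp add: pred_def)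
qed

lemma measure_survival_tendsto_0:
  assumes extinct: "AE \<omega> in brw_space F. \<not> nonextinct \<omega>" and \<mu>: "prob_space \<mu>"
  defines "E n \<equiv> {z \<in> space (labelled_space \<mu>). \<exists>w. alive (families z) w \<and> length w = n}"
  shows "(\<lambda>n. measure (labelled_space \<mu>) (E n)) \<longlonglongrightarrow> 0"
proof -
  interpret L: prob_space "labelled_space \<mu>"
    by (intro prob_space_PiM prob_space_pair prob_space_F \<mu>)
  have E: "E n \<in> sets (labelled_space \<mu>)" for n
    unfolding E_def by (rule survival_in_sets)
  have "E (Suc n) \<subseteq> E n" for n
  proof
    fix z assume "z \<in> E (Suc n)"
    then obtain w where "z \<in> space (labelled_space \<mu>)" "alive (families z) w" "length w = Suc n"
      by (auto simp: E_def)
    then show "z \<in> E n"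
      unfolding E_def by (auto intro!: exI[of _ "take n w"] alive_take)
  qed
  then have "decseq E" by (rule decseq_SucI)
  then have "(\<lambda>n. measure (labelled_space \<mu>) (E n)) \<longlonglongrightarrow> measure (labelled_space \<mu>) (\<Inter>n. E n)"
    using E by (intro L.finite_Lim_measure_decseq) auto
  moreover have "AE \<omega> in distr (labelled_space \<mu>) (brw_space F) families. \<not> nonextinct \<omega>"
    using extinct by (subst distr_families[OF \<mu>])
  then have "AE z in labelled_space \<mu>. \<not> nonextinct (families z)"
    by (rule AE_distrD[OF measurable_families])
  then have "measure (labelled_space \<mu>) (\<Inter>n. E n) \<le> measure (labelled_space \<mu>) {}"
    by (intro L.finite_measure_mono_AE) (auto simp: E_def nonextinct_def elim!: eventually_mono)
  then have "measure (labelled_space \<mu>) (\<Inter>n. E n) = 0"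
    by (simp add: measure_nonneg antisym)
  ultimately show ?thesis by simp
qed

lemma solution_unique_if_extinct:
  assumes extinct: "AE \<omega> in brw_space F. \<not> nonextinct \<omega>" and sol: "rde_solution F \<mu>"
  shows "\<mu> = lawR F"
proof -
  note \<mu> = rde_solutionD(1,2)[OF sol]
  define E where "E n = {z \<in> space (labelled_space \<mu>). \<exists>w. alive (families z) w \<and> length w = n}" for n
  have L: "prob_space (labelled_space \<mu>)"
    by (intro prob_space_PiM prob_space_pair prob_space_F \<mu>(1))
  have E: "E n \<in> sets (labelled_space \<mu>)" for n
    unfolding E_def by (rule survival_in_sets)
  have E_vanish: "(\<lambda>n. measure (labelled_space \<mu>) (E n)) \<longlonglongrightarrow> 0"
    unfolding E_def by (rule measure_survival_tendsto_0[OF extinct \<mu>(1)])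
  have eq: "rde_iterate n z = allmax (families z)" if "z \<in> space (labelled_space \<mu>)" "z \<notin> E n" for n z
    using that by (simp add: E_def rde_iterate_eq_allmax_upto allmax_upto_eq_allmax)
  have law: "distr (labelled_space \<mu>) borel (rde_iterate n) = \<mu>" for n
    using solution_eq_distr_rde_iterate[OF sol] by simp
  have "distr (labelled_space \<mu>) borel (\<lambda>z. allmax (families z)) = \<mu>"
    by (rule distr_eq_if_eq_outside_vanishing[OF L measurable_rde_iterate[OF \<mu>(2)]
          measurable_compose[OF measurable_families measurable_allmax] E E_vanish eq law])
  then show ?thesis
    using lawR_eq_distr_families[OF \<mu>(1)] by simp
qed


lemma lawR_stoch_le_solution:
  assumes sol: "rde_solution F \<mu>"
  shows "stoch_le (lawR F) \<mu>"
  unfolding stoch_le_def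
proof
  fix x :: ereal
  note \<mu> = rde_solutionD[OF sol]
  interpret L: prob_space "labelled_space \<mu>"
    by (intro prob_space_PiM prob_space_pair prob_space_F \<mu>(1))
  have allmax_families: "(\<lambda>z. allmax (families z)) \<in> borel_measurable (labelled_space \<mu>)"
    by (rule measurable_compose[OF measurable_families measurable_allmax])
  define G where "G n = (\<lambda>z. allmax_upto n (families z)) -` {x<..} \<inter> space (labelled_space \<mu>)" for n
  have G: "G n \<in> sets (labelled_space \<mu>)" for n
    unfolding G_def
    by (rule measurable_sets[OF measurable_compose[OF measurable_families measurable_allmax_upto]]) simp
  have "incseq G"
    using incseq_allmax_upto unfolding G_def incseq_def by (fastforce intro: less_le_trans)
  then have "(\<lambda>n. measure (labelled_space \<mu>) (G n)) \<longlonglongrightarrow> measure (labelled_space \<mu>) (\<Union>n. G n)"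
    using G by (intro L.finite_Lim_measure_incseq) auto
  moreover have "measure (labelled_space \<mu>) (G n) \<le> measure \<mu> {x<..}" for n
  proof -
    have "measure (labelled_space \<mu>) (G n)
        \<le> measure (labelled_space \<mu>) (rde_iterate n -` {x<..} \<inter> space (labelled_space \<mu>))"
      using AE_labels_nonneg[OF \<mu>(1,4)]
      by (intro L.finite_measure_mono_AE measurable_sets[OF measurable_rde_iterate[OF \<mu>(2)]])
         (auto simp: G_def elim!: eventually_mono intro: less_le_trans allmax_upto_le_rde_iterate)
    also have "\<dots> = measure \<mu> {x<..}"
      by (subst (2) solution_eq_distr_rde_iterate[OF sol, of n])
         (rule measure_distr[symmetric, OF measurable_rde_iterate[OF \<mu>(2)]], simp)
    finally show ?thesis .
  qed
  ultimately have "measure (labelled_space \<mu>) (\<Union>n. G n) \<le> measure \<mu> {x<..}"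
    by (intro LIMSEQ_le_const2) auto
  moreover have "(\<Union>n. G n) = (\<lambda>z. allmax (families z)) -` {x<..} \<inter> space (labelled_space \<mu>)"
    by (auto simp: G_def allmax_eq_SUP_allmax_upto less_SUP_iff)
  moreover have "measure (lawR F) {x<..}
      = measure (labelled_space \<mu>) ((\<lambda>z. allmax (families z)) -` {x<..} \<inter> space (labelled_space \<mu>))"
    unfolding lawR_eq_distr_families[OF \<mu>(1)] by (rule measure_distr[OF allmax_families]) simp
  ultimately show "measure (lawR F) {x<..} \<le> measure \<mu> {x<..}" by simp
qed

lemma cdf_real_of_ereal_distr_brw_space:
  assumes f: "f \<in> borel_measurable (brw_space F)"
    and finite: "AE \<omega> in brw_space F. 0 \<le> f \<omega> \<and> f \<omega> < \<infinity>"
  shows "cdf (distr (distr (brw_space F) borel f) borel real_of_ereal) x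
    = measure (brw_space F) (f -` {..ereal x} \<inter> space (brw_space F))"
proof -
  have "AE \<omega> in brw_space F. \<bar>f \<omega>\<bar> \<noteq> \<infinity>"
    using finite by eventually_elim auto
  then have "AE y in distr (brw_space F) borel f. \<bar>y\<bar> \<noteq> \<infinity>"
    using f by (subst AE_distr_iff) auto
  then have "cdf (distr (distr (brw_space F) borel f) borel real_of_ereal) x
      = measure (distr (brw_space F) borel f) {..ereal x}"
    by (intro cdf_distr_real_of_ereal) simp
  also have "\<dots> = measure (brw_space F) (f -` {..ereal x} \<inter> space (brw_space F))"
    by (rule measure_distr[OF f]) simp
  finally show ?thesis .
qed

lemma weak_conv_T_op_power_return_0:
  assumes finite: "AE \<omega> in brw_space F. allmax \<omega> < \<infinity>"
  shows "weak_conv_m (\<lambda>n. distr ((T_op F ^^ n) (return borel 0)) borel real_of_ereal)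
                     (distr (lawR F) borel real_of_ereal)"
  unfolding weak_conv_m_def weak_conv_def
proof (intro allI impI)
  fix x :: real
  interpret B: prob_space "brw_space F" by (rule prob_space_brw_space)
  define H where "H n = allmax_upto n -` {..ereal x} \<inter> space (brw_space F)" for n
  have H: "H n \<in> sets (brw_space F)" for n
    unfolding H_def by (rule measurable_sets[OF measurable_allmax_upto]) simp
  have "decseq H"
    using incseq_allmax_upto unfolding H_def incseq_def decseq_def by (fastforce intro: order.trans)
  then have "(\<lambda>n. measure (brw_space F) (H n)) \<longlonglongrightarrow> measure (brw_space F) (\<Inter>n. H n)"
    using H by (intro B.finite_Lim_measure_decseq) auto
  moreover have "cdf (distr ((T_op F ^^ n) (return borel 0)) borel real_of_ereal) x = measure (brw_space F) (H n)" for n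
  proof -
    have "AE \<omega> in brw_space F. 0 \<le> allmax_upto n \<omega> \<and> allmax_upto n \<omega> < \<infinity>"
      using finite
      by eventually_elim (metis allmax_upto_le_allmax allmax_upto_nonneg le_less_trans)
    then show ?thesis
      unfolding T_op_power_return_0 H_def
      by (intro cdf_real_of_ereal_distr_brw_space measurable_allmax_upto)
  qed
  moreover have "(\<Inter>n. H n) = allmax -` {..ereal x} \<inter> space (brw_space F)"
    by (auto simp: H_def allmax_eq_SUP_allmax_upto SUP_le_iff)
  moreover have "cdf (distr (lawR F) borel real_of_ereal) x
      = measure (brw_space F) (allmax -` {..ereal x} \<inter> space (brw_space F))"
    unfolding lawR_def using finite
    by (intro cdf_real_of_ereal_distr_brw_space measurable_allmax) (auto simp: allmax_nonneg)
  ultimately show "(\<lambda>n. cdf (distr ((T_op F ^^ n) (return borel 0)) borel real_of_ereal) x)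
      \<longlonglongrightarrow> cdf (distr (lawR F) borel real_of_ereal) x"
    by simp
qed


lemma endogenous_if_inv_RTP:
  assumes rtp: "inv_RTP F M data X (lawR F)"
  shows "endogenous F M data X"
proof -
  have M: "prob_space M" and indep: "prob_space.indep_vars M (\<lambda>_. F) data UNIV"
    and data_law: "\<And>w. distr M F (data w) = F"
    and X: "\<And>w. X w \<in> borel_measurable M" and X_law: "\<And>w. distr M borel (X w) = lawR F"
    and rec: "\<And>w. AE \<omega> in M. X w \<omega> = rde_map (data w \<omega>) (\<lambda>j. X (w @ [j]) \<omega>)"
    using rtp unfolding inv_RTP_def by blast+
  interpret M: prob_space M by (rule M)
  define D where "D \<omega> = (\<lambda>w. data w \<omega>)" for \<omega>
  have data: "\<And>w. data w \<in> measurable M F"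
    using indep unfolding M.indep_vars_def by blast
  have D: "D \<in> measurable M (brw_space F)"
    unfolding D_def brw_space_def using data
    by (intro measurable_PiM_single') (auto simp: space_PiM intro: measurable_space[OF data])
  have D_law: "distr M (brw_space F) D = brw_space F"
    unfolding D_def brw_space_def by (rule M.distr_iid_eq_PiM[OF indep data_law])
  have allmax_D: "(\<lambda>\<omega>. allmax (D \<omega>)) \<in> borel_measurable M"
    by (rule measurable_compose[OF D measurable_allmax])
  have "AE \<omega> in M. 0 \<le> X w \<omega>" for w
    using AE_lawR_nonneg unfolding X_law[of w, symmetric] by (rule AE_distrD[OF X])
  then have "AE \<omega> in M. (\<forall>w. X w \<omega> = rde_map (data w \<omega>) (\<lambda>j. X (w @ [j]) \<omega>)) \<and> (\<forall>w. 0 \<le> X w \<omega>)"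
    using rec by (simp add: AE_all_countable)
  then have le: "AE \<omega> in M. allmax (D \<omega>) \<le> X [] \<omega>"
    unfolding D_def by eventually_elim (rule allmax_le_if_recursive; blast)
  have "distr M borel (\<lambda>\<omega>. allmax (D \<omega>)) = distr (distr M (brw_space F) D) borel allmax"
    using distr_distr[OF measurable_allmax D] by (simp add: comp_def)
  then have "distr M borel (X []) = distr M borel (\<lambda>\<omega>. allmax (D \<omega>))"
    by (simp add: D_law X_law lawR_def)
  then have "AE \<omega> in M. X [] \<omega> = allmax (D \<omega>)"
    by (rule AE_eq_if_AE_le_and_distr_eq[OF M X allmax_D le])
  then show ?thesis
    unfolding endogenous_def D_def using measurable_allmax unfolding brw_space_def by blast
qed


end


theorem lemma24:
  fixes F :: "family measure"
  assumes law: "brw_law F"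
    and cases: "(AE \<omega> in brw_space F. \<not> nonextinct \<omega>)
      \<or> ((\<integral>\<^sup>+ f. ennreal_of_enat (fst f) \<partial>F) > 1 \<and>
         (\<exists>\<gamma>::real. \<gamma> < 0 \<and> (AE \<omega> in brw_space F. nonextinct \<omega> \<longrightarrow>
             (\<lambda>n. rightmost \<omega> n / ereal (real n)) \<longlonglongrightarrow> ereal \<gamma>)))"
  shows "(AE \<omega> in brw_space F. 0 \<le> allmax \<omega> \<and> allmax \<omega> < \<infinity>)
    \<and> rde_solution F (lawR F)
    \<and> ((AE \<omega> in brw_space F. \<not> nonextinct \<omega>) \<longrightarrow>
         (\<forall>\<mu>. rde_solution F \<mu> \<longrightarrow> \<mu> = lawR F)
         \<and> (\<forall>(M::'o measure) data X. inv_RTP F M data X (lawR F) \<longrightarrow> endogenous F M data X))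
    \<and> (((\<integral>\<^sup>+ f. ennreal_of_enat (fst f) \<partial>F) > 1 \<and>
         (\<exists>\<gamma>::real. \<gamma> < 0 \<and> (AE \<omega> in brw_space F. nonextinct \<omega> \<longrightarrow>
             (\<lambda>n. rightmost \<omega> n / ereal (real n)) \<longlonglongrightarrow> ereal \<gamma>))) \<longrightarrow>
         weak_conv_m (\<lambda>n. distr ((T_op F ^^ n) (return borel 0)) borel real_of_ereal)
                     (distr (lawR F) borel real_of_ereal)
         \<and> (\<forall>\<mu>. rde_solution F \<mu> \<longrightarrow> stoch_le (lawR F) \<mu>)
         \<and> (\<forall>(M::'o measure) data X. inv_RTP F M data X (lawR F) \<longrightarrow> endogenous F M data X))"
proof -
  interpret family_law F
    using law by (simp add: family_law_def brw_law_def)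
  obtain \<theta> where \<theta>: "\<theta> > 0" "(\<integral>\<^sup>+ f. (\<Sum>j. child_weight \<theta> f j) \<partial>F) < \<infinity>"
    using law by (auto simp: brw_law_def child_weight_def)
  have "AE \<omega> in brw_space F. eventually_nonpositive \<omega>"
    using cases
    by (elim disjE conjE exE)
       (auto elim!: eventually_mono
          intro: eventually_nonpositive_if_extinct eventually_nonpositive_if_speed_negative)
  then have finite: "AE \<omega> in brw_space F. allmax \<omega> < \<infinity>"
    by (rule AE_allmax_finite[OF \<theta>])
  then show ?thesis
    by (auto simp: allmax_nonneg rde_solution_lawR solution_unique_if_extinct
        lawR_stoch_le_solution endogenous_if_inv_RTP weak_conv_T_op_power_return_0)
qed

end
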